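(* Let $r\ge 2$, $e\ge1$ and $0\le p\le\lfloor re/2\rfloor$ be integers. Let $\mathcal{M}$ be the set of $(r+1)\times(r+1)$ matrices $M=(m_{ij})$ with nonnegative integer entries, zero diagonal entries, and with both row sums and column sums given by the vector $(e,\dots,e,re-2p)$ (the first $r$ entries equal to $e$). Define $$\mathcal{T}_{r,e,p}(t;z_1,\dots,z_r)=\sum_{M\in\mathcal{M}}\frac{\prod_{1\le i,j\le r}(z_i-z_j)^{m_{ij}}\prod_{1\le i\le r}(t-z_i)^{m_{i,r+1}}\prod_{1\le j\le r}(t-z_j)^{m_{r+1,j}}}{\prod_{1\le i,j\le r+1}m_{ij}!}.$$ Then $\mathcal{T}_{r,e,p}$ is not identically zero as a polynomial in $t,z_1,\dots,z_r$. *)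

theory Defs
  imports Complex_Main
begin

text \<open>Matrices (r+1)x(r+1) are functions nat => nat => nat, indices 0..r
  (index r plays the role of r+1 in the paper), zero outside {0..r}x{0..r}.\<close>

definition margin :: "nat \<Rightarrow> nat \<Rightarrow> nat \<Rightarrow> nat \<Rightarrow> nat" where
  "margin r e p i = (if i < r then e else r * e - 2 * p)"

definition Mset :: "nat \<Rightarrow> nat \<Rightarrow> nat \<Rightarrow> (nat \<Rightarrow> nat \<Rightarrow> nat) set" where
  "Mset r e p = {m. (\<forall>i j. (i > r \<or> j > r) \<longrightarrow> m i j = 0)
                  \<and> (\<forall>i\<le>r. m i i = 0)
                  \<and> (\<forall>i\<le>r. (\<Sum>j\<le>r. m i j) = margin r e p i)
                  \<and> (\<forall>j\<le>r. (\<Sum>i\<le>r. m i j) = margin r e p j)}"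

definition Tpoly :: "nat \<Rightarrow> nat \<Rightarrow> nat \<Rightarrow> real \<Rightarrow> (nat \<Rightarrow> real) \<Rightarrow> real" where
  "Tpoly r e p t z =
     (\<Sum>m\<in>Mset r e p.
        (\<Prod>i<r. \<Prod>j<r. (z i - z j) ^ m i j)
        * (\<Prod>i<r. (t - z i) ^ m i r)
        * (\<Prod>j<r. (t - z j) ^ m r j)
        / (\<Prod>i\<le>r. \<Prod>j\<le>r. fact (m i j)))"

end

theory Submission
  imports Defs
begin

(* Evaluate T at a point where z_1, ..., z_r take only the values 0, 1, 2 and t = 2.
   Up to sign, T is then a sum over (r+1) x (r+1) contingency tables with the prescribed margins
   of the products of w_ij^m_ij / m_ij!, where w_ij is the difference of the values at i and j.
   Two indices carrying the same value can be merged, which only multiplies the sum by positive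
   binomial coefficients (Vandermonde), so everything collapses to 3 x 3 zero-diagonal tables with
   row and column sums A + B, A + C, B + C. Those form a one-parameter family, and their sum is
   +-4^B times Dixon's sum SUM_k (-1)^k / ((A+k)! (A-k)! (B+k)! (B-k)! (C+k)! (C-k)!), which is
   positive by its Wilf-Zeilberger recurrence. The sizes of the three blocks (about r/2 indices
   at 0, the others at 1, and at most one besides t at 2) are chosen so that A, B, C >= 0. *)

section \<open>Dixon's alternating sum\<close>

definition inv_fact :: "int \<Rightarrow> real" where
  "inv_fact n = (if n < 0 then 0 else 1 / fact (nat n))"

lemma inv_fact_eq_mult_plus_one: "inv_fact n = of_int (n + 1) * inv_fact (n + 1)"
proof -
  have "fact (nat (n + 1)) = real_of_int (n + 1) * fact (nat n)" if "n \<ge> 0"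
    using that by (simp add: nat_add_distrib)
  then show ?thesis
    by (cases "n < -1 \<or> n = -1") (auto simp: inv_fact_def)
qed

lemma inv_fact_pos: "n \<ge> 0 \<Longrightarrow> inv_fact n > 0"
  by (simp add: inv_fact_def)

definition dixon_term :: "int \<Rightarrow> int \<Rightarrow> int \<Rightarrow> int \<Rightarrow> real" where
  "dixon_term a b c k = (-1) powi k * inv_fact (a + k) * inv_fact (a - k)
     * inv_fact (b + k) * inv_fact (b - k) * inv_fact (c + k) * inv_fact (c - k)"

(* The Wilf-Zeilberger certificate of dixon_term: it makes the recurrence of dixon_sum telescope. *)
definition dixon_cert :: "int \<Rightarrow> int \<Rightarrow> int \<Rightarrow> int \<Rightarrow> real" where
  "dixon_cert a b c k = (-1) powi (k + 1) * inv_fact (a + k) * inv_fact (a + 1 - k)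
     * inv_fact (b + k - 1) * inv_fact (b - k) * inv_fact (c + k - 1) * inv_fact (c - k)"

lemma dixon_wz_equation:
  "2 * (of_int ((a + 1) * (a + b + 1) * (a + c + 1)) * dixon_term (a + 1) b c k
        - of_int (a + b + c + 1) * dixon_term a b c k)
     = dixon_cert a b c (k + 1) - dixon_cert a b c k"
proof -
  define P where "P = (-1) powi k * inv_fact (a + 1 + k) * inv_fact (a + 1 - k)
     * inv_fact (b + k) * inv_fact (b - k) * inv_fact (c + k) * inv_fact (c - k)"
  have shift: "inv_fact (a + k) = of_int (a + k + 1) * inv_fact (a + 1 + k)"
    "inv_fact (a - k) = of_int (a - k + 1) * inv_fact (a + 1 - k)"
    "inv_fact (b + k - 1) = of_int (b + k) * inv_fact (b + k)"
    "inv_fact (b - (k + 1)) = of_int (b - k) * inv_fact (b - k)"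
    "inv_fact (c + k - 1) = of_int (c + k) * inv_fact (c + k)"
    "inv_fact (c - (k + 1)) = of_int (c - k) * inv_fact (c - k)"
    by (subst inv_fact_eq_mult_plus_one; simp add: algebra_simps)+
  have lhs: "of_int ((a + 1) * (a + b + 1) * (a + c + 1)) * dixon_term (a + 1) b c k
        - of_int (a + b + c + 1) * dixon_term a b c k
      = P * of_int ((a + 1) * (a + b + 1) * (a + c + 1) - (a + b + c + 1) * (a + k + 1) * (a - k + 1))"
    unfolding dixon_term_def P_def shift(1,2) by (simp add: algebra_simps)
  have cert_Suc: "dixon_cert a b c (k + 1) = (-1) powi k * inv_fact (a + 1 + k) * inv_fact (a - k)
      * inv_fact (b + k) * inv_fact (b - (k + 1)) * inv_fact (c + k) * inv_fact (c - (k + 1))"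
  proof -
    have eqs: "a + (k + 1) = a + 1 + k" "a + 1 - (k + 1) = a - k" "b + (k + 1) - 1 = b + k"
      "c + (k + 1) - 1 = c + k" "(-1::real) powi (k + 1 + 1) = (-1) powi k"
      by (simp_all add: power_int_add)
    show ?thesis unfolding dixon_cert_def by (simp only: eqs)
  qed
  have cert: "dixon_cert a b c k = - ((-1) powi k * inv_fact (a + k) * inv_fact (a + 1 - k)
      * inv_fact (b + k - 1) * inv_fact (b - k) * inv_fact (c + k - 1) * inv_fact (c - k))"
    by (simp add: dixon_cert_def power_int_add_1)
  have rhs: "dixon_cert a b c (k + 1) - dixon_cert a b c k
      = P * of_int ((a - k + 1) * (b - k) * (c - k) + (a + k + 1) * (b + k) * (c + k))"
    unfolding cert_Suc cert shift P_def by (simp add: algebra_simps)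
  have poly: "2 * real_of_int ((a + 1) * (a + b + 1) * (a + c + 1) - (a + b + c + 1) * (a + k + 1) * (a - k + 1))
      = of_int ((a - k + 1) * (b - k) * (c - k) + (a + k + 1) * (b + k) * (c + k))"
    by simp algebra
  show ?thesis
    unfolding lhs rhs mult.left_commute[of 2 P] poly ..
qed

lemma dixon_term_eq_0: "a < \<bar>k\<bar> \<or> b < \<bar>k\<bar> \<or> c < \<bar>k\<bar> \<Longrightarrow> dixon_term a b c k = 0"
  by (cases "k \<ge> 0") (auto simp: dixon_term_def inv_fact_def)

lemma dixon_cert_eq_0: "k < - a \<or> a + 1 < k \<Longrightarrow> dixon_cert a b c k = 0"
  by (auto simp: dixon_cert_def inv_fact_def)

lemma sum_int_telescope:
  "(\<Sum>k\<in>{l..l + int n}. f (k + 1) - f k) = f (l + int n + 1) - (f l :: 'a::ab_group_add)"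
proof (induction n)
  case (Suc n)
  have "{l..l + int (Suc n)} = insert (l + int n + 1) {l..l + int n}"
    by auto
  then show ?case
    using Suc by (simp add: algebra_simps)
qed simp

definition dixon_sum :: "nat \<Rightarrow> nat \<Rightarrow> nat \<Rightarrow> real" where
  "dixon_sum a b c = (\<Sum>k\<in>{-int a..int a}. dixon_term a b c k)"

lemma dixon_sum_eq_sum_wider:
  assumes "a \<le> n"
  shows "dixon_sum a b c = (\<Sum>k\<in>{-int n..int n}. dixon_term a b c k)"
  unfolding dixon_sum_def using assms
  by (intro sum.mono_neutral_left) (auto intro!: dixon_term_eq_0)

lemma dixon_sum_Suc:
  "real ((a + 1) * (a + b + 1) * (a + c + 1)) * dixon_sum (Suc a) b c
     = real (a + b + c + 1) * dixon_sum a b c"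
proof -
  let ?K = "{-int (Suc a)..int (Suc a)}"
  let ?D = "\<lambda>a k. dixon_term (int a) (int b) (int c) k"
  let ?X = "real ((a + 1) * (a + b + 1) * (a + c + 1))" and ?Y = "real (a + b + c + 1)"
  have "dixon_sum (Suc a) b c = (\<Sum>k\<in>?K. ?D (Suc a) k)"
    unfolding dixon_sum_def ..
  moreover have "dixon_sum a b c = (\<Sum>k\<in>?K. ?D a k)"
    by (rule dixon_sum_eq_sum_wider) simp
  ultimately have "2 * (?X * dixon_sum (Suc a) b c - ?Y * dixon_sum a b c)
      = (\<Sum>k\<in>?K. 2 * (?X * ?D (Suc a) k - ?Y * ?D a k))"
    by (simp only: sum_distrib_left sum_subtractf[symmetric])
  also have "\<dots> = (\<Sum>k\<in>?K. dixon_cert a b c (k + 1) - dixon_cert a b c k)"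
  proof (intro sum.cong refl)
    have "?X = of_int ((int a + 1) * (int a + int b + 1) * (int a + int c + 1))"
      "?Y = of_int (int a + int b + int c + 1)" "int (Suc a) = int a + 1"
      by (simp_all add: algebra_simps)
    then show "2 * (?X * ?D (Suc a) k - ?Y * ?D a k) = dixon_cert a b c (k + 1) - dixon_cert a b c k"
      for k by (simp only: dixon_wz_equation)
  qed
  also have "?K = {- int a - 1..- int a - 1 + int (2 * a + 2)}"
    by simp
  also have "(\<Sum>k\<in>\<dots>. dixon_cert a b c (k + 1) - dixon_cert a b c k)
      = dixon_cert a b c (int a + 2) - dixon_cert a b c (- int a - 1)"
    by (subst sum_int_telescope) (simp add: add.commute)
  also have "\<dots> = 0"
    by (simp add: dixon_cert_eq_0)
  finally show ?thesis
    by simp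
qed

(* By Dixon's identity the sum equals (a + b + c)! / (a! b! c! (a + b)! (a + c)! (b + c)!);
   its recurrence in a is all that positivity needs. *)
lemma dixon_sum_pos: "dixon_sum a b c > 0"
proof (induction a)
  case 0
  show ?case
    by (simp add: dixon_sum_def dixon_term_def inv_fact_pos)
next
  case (Suc a)
  have "0 < (a + 1) * (a + b + 1) * (a + c + 1)"
    by simp
  then have "0 < real ((a + 1) * (a + b + 1) * (a + c + 1))"
    by (simp only: of_nat_0_less_iff)
  moreover have "0 < real ((a + 1) * (a + b + 1) * (a + c + 1)) * dixon_sum (Suc a) b c"
    using Suc dixon_sum_Suc[of a b c] by simp
  ultimately show ?case
    by (simp add: zero_less_mult_iff)
qed

section \<open>Weighted sums over contingency tables\<close>

definition contingency_tables ::
    "'a set \<Rightarrow> 'b set \<Rightarrow> ('a \<Rightarrow> nat) \<Rightarrow> ('b \<Rightarrow> nat) \<Rightarrow> ('a \<Rightarrow> 'b \<Rightarrow> nat) set" where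
  "contingency_tables I J \<rho> \<sigma> = {M. (\<forall>i j. i \<notin> I \<or> j \<notin> J \<longrightarrow> M i j = 0)
      \<and> (\<forall>i\<in>I. (\<Sum>j\<in>J. M i j) = \<rho> i) \<and> (\<forall>j\<in>J. (\<Sum>i\<in>I. M i j) = \<sigma> j)}"

definition table_weight :: "'a set \<Rightarrow> 'b set \<Rightarrow> ('a \<Rightarrow> 'b \<Rightarrow> real) \<Rightarrow> ('a \<Rightarrow> 'b \<Rightarrow> nat) \<Rightarrow> real" where
  "table_weight I J w M = (\<Prod>i\<in>I. \<Prod>j\<in>J. w i j ^ M i j / fact (M i j))"

definition table_sum ::
    "'a set \<Rightarrow> 'b set \<Rightarrow> ('a \<Rightarrow> 'b \<Rightarrow> real) \<Rightarrow> ('a \<Rightarrow> nat) \<Rightarrow> ('b \<Rightarrow> nat) \<Rightarrow> real" where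
  "table_sum I J w \<rho> \<sigma> = (\<Sum>M\<in>contingency_tables I J \<rho> \<sigma>. table_weight I J w M)"

lemma finite_contingency_tables:
  assumes "finite I" "finite J"
  shows "finite (contingency_tables I J \<rho> \<sigma>)"
proof -
  define Row where "Row = {f. \<forall>j. (j \<in> J \<longrightarrow> f j \<in> {..sum \<rho> I}) \<and> (j \<notin> J \<longrightarrow> f j = 0)}"
  have "contingency_tables I J \<rho> \<sigma> \<subseteq> {M. \<forall>i. (i \<in> I \<longrightarrow> M i \<in> Row) \<and> (i \<notin> I \<longrightarrow> M i = (\<lambda>_. 0))}"
  proof
    fix M
    assume M: "M \<in> contingency_tables I J \<rho> \<sigma>"
    have "M i j \<le> sum \<rho> I" if "i \<in> I" "j \<in> J" for i j
    proof -
      have "M i j \<le> (\<Sum>j\<in>J. M i j)" and "\<rho> i \<le> sum \<rho> I"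
        using assms that by (auto intro: member_le_sum)
      then show ?thesis
        using M that by (simp add: contingency_tables_def)
    qed
    then show "M \<in> {M. \<forall>i. (i \<in> I \<longrightarrow> M i \<in> Row) \<and> (i \<notin> I \<longrightarrow> M i = (\<lambda>_. 0))}"
      using M by (auto simp: Row_def contingency_tables_def)
  qed
  moreover have "finite Row"
    unfolding Row_def using assms(2) by (intro finite_set_of_finite_funs) auto
  ultimately show ?thesis
    using assms(1) by (elim finite_subset) (intro finite_set_of_finite_funs)
qed

lemma contingency_tables_transpose:
  "bij_betw (\<lambda>M j i. M i j) (contingency_tables I J \<rho> \<sigma>) (contingency_tables J I \<sigma> \<rho>)"
  by (rule bij_betw_byWitness[where f' = "\<lambda>M i j. M j i"]) (auto simp: contingency_tables_def)

lemma table_sum_transpose: "table_sum I J w \<rho> \<sigma> = table_sum J I (\<lambda>j i. w i j) \<sigma> \<rho>"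
  unfolding table_sum_def table_weight_def
  by (subst sum.reindex_bij_betw[OF contingency_tables_transpose, symmetric]) (simp add: prod.swap[of _ I])

definition bounded_compositions :: "'a set \<Rightarrow> ('a \<Rightarrow> nat) \<Rightarrow> nat \<Rightarrow> ('a \<Rightarrow> nat) set" where
  "bounded_compositions J U k = {u. (\<forall>j. j \<notin> J \<longrightarrow> u j = 0) \<and> (\<forall>j. u j \<le> U j) \<and> sum u J = k}"

lemma finite_bounded_compositions:
  assumes "finite J"
  shows "finite (bounded_compositions J U k)"
proof (rule finite_subset)
  show "bounded_compositions J U k
      \<subseteq> {u. \<forall>j. (j \<in> J \<longrightarrow> u j \<in> {..sum U J}) \<and> (j \<notin> J \<longrightarrow> u j = 0)}"
  proof
    fix u
    assume u: "u \<in> bounded_compositions J U k"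
    have "u j \<le> sum U J" if "j \<in> J" for j
      using u member_le_sum[OF that _ assms, of U] by (auto simp: bounded_compositions_def intro: le_trans)
    then show "u \<in> {u. \<forall>j. (j \<in> J \<longrightarrow> u j \<in> {..sum U J}) \<and> (j \<notin> J \<longrightarrow> u j = 0)}"
      using u by (simp add: bounded_compositions_def)
  qed
qed (use assms in \<open>intro finite_set_of_finite_funs; simp\<close>)

lemma bij_betw_bounded_compositions_insert:
  assumes "finite J" "j0 \<notin> J" "x \<le> k"
  shows "bij_betw (\<lambda>u. u(j0 := 0)) {u \<in> bounded_compositions (insert j0 J) U k. u j0 = x}
           (if x \<le> U j0 then bounded_compositions J U (k - x) else {})"
proof (cases "x \<le> U j0")
  case True
  have sum_upd: "(\<Sum>j\<in>J. if j = j0 then y else u j) = sum u J" for u :: "'a \<Rightarrow> nat" and y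
    using assms(2) by (intro sum.cong) auto
  show ?thesis
    using True assms
    by (intro bij_betw_byWitness[where f' = "\<lambda>v. v(j0 := x)"])
      (auto simp: bounded_compositions_def sum_upd fun_eq_iff)
next
  case False
  then have empty: "{u \<in> bounded_compositions (insert j0 J) U k. u j0 = x} = {}"
    by (auto simp: bounded_compositions_def)
  show ?thesis
    by (subst empty) (simp add: False bij_betw_def)
qed

lemma sum_prod_choose_bounded_compositions:
  assumes "finite J"
  shows "(\<Sum>u\<in>bounded_compositions J U k. \<Prod>j\<in>J. U j choose u j) = sum U J choose k"
  using assms
proof (induction J arbitrary: k rule: finite_induct)
  case empty
  have "bounded_compositions {} U k = (if k = 0 then {\<lambda>_. 0} else {})"
    by (auto simp: bounded_compositions_def)
  then show ?case
    by simp
next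
  case (insert j0 J)
  let ?B = "bounded_compositions (insert j0 J) U k"
  let ?f = "\<lambda>u. \<Prod>j\<in>J. U j choose u j"
  have fibre: "(\<Sum>u\<in>{u \<in> ?B. u j0 = x}. \<Prod>j\<in>insert j0 J. U j choose u j)
      = (U j0 choose x) * (sum U J choose (k - x))" if "x \<le> k" for x
  proof -
    have "(\<Sum>u\<in>{u \<in> ?B. u j0 = x}. \<Prod>j\<in>insert j0 J. U j choose u j)
        = (U j0 choose x) * (\<Sum>u\<in>{u \<in> ?B. u j0 = x}. ?f u)"
      using insert.hyps by (simp add: sum_distrib_left)
    also have "\<dots> = (U j0 choose x) * (\<Sum>u\<in>{u \<in> ?B. u j0 = x}. ?f (u(j0 := 0)))"
    proof -
      have "?f (u(j0 := 0)) = ?f u" for u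
        using insert.hyps by (intro prod.cong) auto
      then show ?thesis
        by (simp only:)
    qed
    also have "\<dots> = (U j0 choose x) * (\<Sum>v\<in>(if x \<le> U j0 then bounded_compositions J U (k - x) else {}). ?f v)"
      by (simp only: sum.reindex_bij_betw[OF bij_betw_bounded_compositions_insert[OF insert.hyps that], of ?f])
    also have "\<dots> = (U j0 choose x) * (sum U J choose (k - x))"
      using insert.IH by simp
    finally show ?thesis .
  qed
  have "(\<lambda>u. u j0) ` ?B \<subseteq> {..k}"
    using insert.hyps by (auto simp: bounded_compositions_def)
  then have "(\<Sum>u\<in>?B. \<Prod>j\<in>insert j0 J. U j choose u j)
      = (\<Sum>x\<le>k. \<Sum>u\<in>{u \<in> ?B. u j0 = x}. \<Prod>j\<in>insert j0 J. U j choose u j)"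
    using insert.hyps by (intro sum.group[symmetric] finite_bounded_compositions) auto
  also have "\<dots> = (\<Sum>x\<le>k. (U j0 choose x) * (sum U J choose (k - x)))"
    using fibre by simp
  also have "\<dots> = sum U (insert j0 J) choose k"
    using insert.hyps by (simp add: vandermonde)
  finally show ?case .
qed

definition merge_rows :: "'a \<Rightarrow> 'a \<Rightarrow> ('a \<Rightarrow> 'b \<Rightarrow> nat) \<Rightarrow> 'a \<Rightarrow> 'b \<Rightarrow> nat" where
  "merge_rows i i' M = M(i := (\<lambda>j. M i j + M i' j), i' := (\<lambda>_. 0))"

lemma sum_merge_rows:
  assumes "finite I" "i \<in> I" "i' \<in> I" "i \<noteq> i'"
  shows "(\<Sum>a\<in>I - {i'}. merge_rows i i' M a j) = (\<Sum>a\<in>I. M a j)"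
proof -
  have "(\<Sum>a\<in>I - {i'}. merge_rows i i' M a j) = M i j + M i' j + (\<Sum>a\<in>I - {i'} - {i}. M a j)"
    using assms by (simp add: sum.remove[of "I - {i'}" i] merge_rows_def)
  also have "\<dots> = (\<Sum>a\<in>I. M a j)"
    using assms by (simp add: sum.remove[of I i'] sum.remove[of "I - {i'}" i] Diff_insert2[symmetric])
  finally show ?thesis .
qed

lemma merge_rows_apply:
  assumes "i \<noteq> i'"
  shows "merge_rows i i' M i = (\<lambda>j. M i j + M i' j)" "merge_rows i i' M i' = (\<lambda>_. 0)"
    "a \<noteq> i \<Longrightarrow> a \<noteq> i' \<Longrightarrow> merge_rows i i' M a = M a"
  using assms by (simp_all add: merge_rows_def)

lemma merge_rows_eq_0_iff:
  "i \<noteq> i' \<Longrightarrow> merge_rows i i' M a b = 0 \<longleftrightarrow> M a b = 0 \<and> (a = i \<longrightarrow> M i' b = 0) \<or> a = i'"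
  by (auto simp: merge_rows_def)

lemma merge_rows_mem_contingency_tables:
  assumes "finite I" "i \<in> I" "i' \<in> I" "i \<noteq> i'" and M: "M \<in> contingency_tables I J \<rho> \<sigma>"
  shows "merge_rows i i' M \<in> contingency_tables (I - {i'}) J (\<rho>(i := \<rho> i + \<rho> i')) \<sigma>"
proof -
  have "\<forall>a b. a \<notin> I - {i'} \<or> b \<notin> J \<longrightarrow> merge_rows i i' M a b = 0"
    using M assms(2,4) by (auto simp: contingency_tables_def merge_rows_eq_0_iff)
  moreover have "\<forall>a\<in>I - {i'}. (\<Sum>j\<in>J. merge_rows i i' M a j) = (\<rho>(i := \<rho> i + \<rho> i')) a"
    using M assms by (auto simp: contingency_tables_def merge_rows_apply sum.distrib)
  ultimately show ?thesis
    using M assms by (simp add: contingency_tables_def sum_merge_rows)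
qed

lemma mem_contingency_tables_iff_merge_rows:
  assumes "finite I" "i \<in> I" "i' \<in> I" "i \<noteq> i'"
  shows "M \<in> contingency_tables I J \<rho> \<sigma> \<longleftrightarrow>
    merge_rows i i' M \<in> contingency_tables (I - {i'}) J (\<rho>(i := \<rho> i + \<rho> i')) \<sigma>
    \<and> (\<Sum>j\<in>J. M i j) = \<rho> i"
    (is "_ \<longleftrightarrow> ?N \<in> contingency_tables ?I' J ?\<rho>' \<sigma> \<and> _")
proof
  assume M: "M \<in> contingency_tables I J \<rho> \<sigma>"
  then have "(\<Sum>j\<in>J. M i j) = \<rho> i"
    using assms(2) by (simp add: contingency_tables_def)
  then show "?N \<in> contingency_tables ?I' J ?\<rho>' \<sigma> \<and> (\<Sum>j\<in>J. M i j) = \<rho> i"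
    using merge_rows_mem_contingency_tables[OF assms M] by simp
next
  assume N: "?N \<in> contingency_tables ?I' J ?\<rho>' \<sigma> \<and> (\<Sum>j\<in>J. M i j) = \<rho> i"
  have "M a b = 0" if "a \<notin> I \<or> b \<notin> J" for a b
  proof (cases "a = i'")
    case True
    then have "?N i b = 0"
      using N that assms by (auto simp: contingency_tables_def)
    then show ?thesis
      using True assms(4) by (simp add: merge_rows_eq_0_iff)
  next
    case False
    then have "?N a b = 0"
      using N that by (auto simp: contingency_tables_def)
    then show ?thesis
      using False assms(4) by (simp add: merge_rows_eq_0_iff)
  qed
  moreover have "(\<Sum>j\<in>J. M a j) = \<rho> a" if "a \<in> I" for a
  proof -
    have "a \<noteq> i' \<Longrightarrow> (\<Sum>j\<in>J. ?N a j) = ?\<rho>' a" and "(\<Sum>j\<in>J. ?N i j) = \<rho> i + \<rho> i'"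
      using N assms that by (simp_all add: contingency_tables_def)
    then show ?thesis
      using N assms by (cases "a = i \<or> a = i'") (auto simp: merge_rows_apply sum.distrib)
  qed
  ultimately show "M \<in> contingency_tables I J \<rho> \<sigma>"
    using N assms by (simp add: contingency_tables_def sum_merge_rows)
qed

lemma power_div_fact_mult_power_div_fact:
  "(x::real) ^ m / fact m * (x ^ n / fact n) = x ^ (m + n) / fact (m + n) * real (m + n choose m)"
  by (simp add: binomial_fact power_add field_simps)

lemma table_weight_merge_rows:
  assumes "finite I" "i \<in> I" "i' \<in> I" "i \<noteq> i'" "w i' = w i"
  shows "table_weight I J w M
    = table_weight (I - {i'}) J w (merge_rows i i' M) * (\<Prod>j\<in>J. real (M i j + M i' j choose M i j))"
proof -
  define row where "row N a = (\<Prod>j\<in>J. w a j ^ N a j / fact (N a j))" for N a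
  have split_I: "table_weight I J w N = row N i' * (row N i * prod (row N) (I - {i'} - {i}))"
    and split_I': "table_weight (I - {i'}) J w N = row N i * prod (row N) (I - {i'} - {i})" for N
    unfolding table_weight_def row_def using assms
    by (simp_all add: prod.remove[of I i'] prod.remove[of "I - {i'}" i])
  have "row M i * row M i' = (\<Prod>j\<in>J. w i j ^ M i j / fact (M i j) * (w i j ^ M i' j / fact (M i' j)))"
    using assms(5) by (simp only: row_def prod.distrib)
  also have "\<dots> = row (merge_rows i i' M) i * (\<Prod>j\<in>J. real (M i j + M i' j choose M i j))"
    by (simp only: row_def merge_rows_apply[OF assms(4)] power_div_fact_mult_power_div_fact
        prod.distrib)
  moreover have "prod (row M) (I - {i'} - {i}) = prod (row (merge_rows i i' M)) (I - {i'} - {i})"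
    using assms by (intro prod.cong) (auto simp: row_def merge_rows_apply)
  ultimately show ?thesis
    unfolding split_I split_I' by (simp add: ac_simps)
qed

lemma bij_betw_merge_rows_fibre:
  assumes "finite I" "i \<in> I" "i' \<in> I" "i \<noteq> i'"
    and M': "M' \<in> contingency_tables (I - {i'}) J (\<rho>(i := \<rho> i + \<rho> i')) \<sigma>"
  shows "bij_betw (\<lambda>M. M i) {M \<in> contingency_tables I J \<rho> \<sigma>. merge_rows i i' M = M'}
           (bounded_compositions J (M' i) (\<rho> i))"
proof -
  have fibre: "{M \<in> contingency_tables I J \<rho> \<sigma>. merge_rows i i' M = M'}
      = {M. merge_rows i i' M = M' \<and> (\<Sum>j\<in>J. M i j) = \<rho> i}"
    using M' by (auto simp: mem_contingency_tables_iff_merge_rows[OF assms(1-4)])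
  have M'_i': "M' i' = (\<lambda>_. 0)" and M'_i: "\<And>j. j \<notin> J \<Longrightarrow> M' i j = 0"
    using M' by (auto simp: contingency_tables_def)
  have merged: "merge_rows i i' M = M' \<longleftrightarrow>
      (\<forall>j. M' i j = M i j + M i' j) \<and> (\<forall>a. a \<noteq> i \<longrightarrow> a \<noteq> i' \<longrightarrow> M' a = M a)" for M
    using assms(4) M'_i' by (auto simp: merge_rows_def fun_eq_iff)
  show ?thesis
    unfolding fibre
  proof (rule bij_betw_byWitness[where f' = "\<lambda>u. M'(i := u, i' := (\<lambda>j. M' i j - u j))"])
    show "(\<lambda>M. M i) ` {M. merge_rows i i' M = M' \<and> (\<Sum>j\<in>J. M i j) = \<rho> i}
        \<subseteq> bounded_compositions J (M' i) (\<rho> i)"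
      using M'_i by (auto simp: merged bounded_compositions_def)
    show "(\<lambda>u. M'(i := u, i' := (\<lambda>j. M' i j - u j))) ` bounded_compositions J (M' i) (\<rho> i)
        \<subseteq> {M. merge_rows i i' M = M' \<and> (\<Sum>j\<in>J. M i j) = \<rho> i}"
      using assms(4) by (auto simp: merged bounded_compositions_def)
  qed (use assms(4) in \<open>auto simp: merged\<close>)
qed

(* table_sum I J w \<rho> \<sigma> is the coefficient of x^\<rho> y^\<sigma> in the product of the exp (w i j * x i * y j).
   When rows i and i' carry equal weights, this product depends on x i and x i' only through
   x i + x i', whence the binomial factor. *)
lemma table_sum_merge_rows:
  assumes "finite I" "finite J" "i \<in> I" "i' \<in> I" "i \<noteq> i'" "w i' = w i"
  shows "table_sum I J w \<rho> \<sigma>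
    = real (\<rho> i + \<rho> i' choose \<rho> i) * table_sum (I - {i'}) J w (\<rho>(i := \<rho> i + \<rho> i')) \<sigma>"
proof -
  let ?T' = "contingency_tables (I - {i'}) J (\<rho>(i := \<rho> i + \<rho> i')) \<sigma>"
  let ?F = "\<lambda>M'. {M \<in> contingency_tables I J \<rho> \<sigma>. merge_rows i i' M = M'}"
  have fibre_sum: "(\<Sum>M\<in>?F M'. table_weight I J w M)
      = real (\<rho> i + \<rho> i' choose \<rho> i) * table_weight (I - {i'}) J w M'" if M': "M' \<in> ?T'" for M'
  proof -
    have "(\<Sum>M\<in>?F M'. table_weight I J w M)
        = (\<Sum>M\<in>?F M'. table_weight (I - {i'}) J w M' * (\<Prod>j\<in>J. real (M' i j choose M i j)))"
    proof (rule sum.cong[OF refl])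
      fix M
      assume "M \<in> ?F M'"
      then have "merge_rows i i' M = M'"
        by simp
      then show "table_weight I J w M = table_weight (I - {i'}) J w M' * (\<Prod>j\<in>J. real (M' i j choose M i j))"
        using assms table_weight_merge_rows[of I i i' w J M] by (auto simp: merge_rows_apply)
    qed
    also have "\<dots> = table_weight (I - {i'}) J w M' * (\<Sum>M\<in>?F M'. \<Prod>j\<in>J. real (M' i j choose M i j))"
      by (simp add: sum_distrib_left)
    also have "(\<Sum>M\<in>?F M'. \<Prod>j\<in>J. real (M' i j choose M i j))
        = (\<Sum>u\<in>bounded_compositions J (M' i) (\<rho> i). \<Prod>j\<in>J. real (M' i j choose u j))"
      using assms M' by (intro sum.reindex_bij_betw bij_betw_merge_rows_fibre) auto
    also have "\<dots> = real (sum (M' i) J choose \<rho> i)"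
      using assms(2) by (simp flip: sum_prod_choose_bounded_compositions)
    also have "sum (M' i) J = \<rho> i + \<rho> i'"
      using M' assms by (simp add: contingency_tables_def)
    finally show ?thesis
      by simp
  qed
  have "(\<lambda>M. merge_rows i i' M) ` contingency_tables I J \<rho> \<sigma> \<subseteq> ?T'"
    using assms by (auto simp: mem_contingency_tables_iff_merge_rows)
  then have "table_sum I J w \<rho> \<sigma> = (\<Sum>M'\<in>?T'. \<Sum>M\<in>?F M'. table_weight I J w M)"
    unfolding table_sum_def using assms
    by (intro sum.group[symmetric] finite_contingency_tables) auto
  also have "\<dots> = real (\<rho> i + \<rho> i' choose \<rho> i) * table_sum (I - {i'}) J w (\<rho>(i := \<rho> i + \<rho> i')) \<sigma>"
    by (simp add: fibre_sum table_sum_def sum_distrib_left)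
  finally show ?thesis .
qed

lemma table_sum_merge_cols:
  assumes "finite I" "finite J" "j \<in> J" "j' \<in> J" "j \<noteq> j'" "\<And>i. w i j' = w i j"
  shows "table_sum I J w \<rho> \<sigma>
    = real (\<sigma> j + \<sigma> j' choose \<sigma> j) * table_sum I (J - {j'}) w \<rho> (\<sigma>(j := \<sigma> j + \<sigma> j'))"
  using assms
  by (simp add: table_sum_transpose[of I] table_sum_transpose[of I "J - {j'}"] table_sum_merge_rows)

lemma table_sum_merge_index:
  assumes "finite X" "x \<in> X" "x' \<in> X" "x \<noteq> x'" "w x' = w x" "\<And>i. w i x' = w i x"
  shows "table_sum X X w \<rho> \<rho> = real (\<rho> x + \<rho> x' choose \<rho> x) ^ 2
    * table_sum (X - {x'}) (X - {x'}) w (\<rho>(x := \<rho> x + \<rho> x')) (\<rho>(x := \<rho> x + \<rho> x'))"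
  using assms
  by (simp add: table_sum_merge_rows[of X X x x'] table_sum_merge_cols[of "X - {x'}" X x x']
      power2_eq_square)

lemma sum_fibres_fun_upd:
  fixes \<rho> :: "'a \<Rightarrow> nat"
  assumes "rep x' \<notin> E" "finite E" "x' \<notin> E"
  defines "\<rho>' \<equiv> \<rho>(rep x' := \<rho> (rep x') + \<rho> x')"
  shows "\<rho>' z + (\<Sum>x\<in>{x \<in> E. rep x = z}. \<rho>' x) = \<rho> z + (\<Sum>x\<in>{x \<in> insert x' E. rep x = z}. \<rho> x)"
proof -
  have "(\<Sum>x\<in>{x \<in> E. rep x = z}. \<rho>' x) = (\<Sum>x\<in>{x \<in> E. rep x = z}. \<rho> x)"
    using assms(1) unfolding \<rho>'_def by (intro sum.cong) auto
  moreover have "{x \<in> insert x' E. rep x = z} = (if z = rep x' then insert x' else id) {x \<in> E. rep x = z}"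
    by auto
  ultimately show ?thesis
    using assms(2,3) by (simp add: \<rho>'_def)
qed

lemma table_sum_collapse:
  assumes "finite E" "finite R" "E \<inter> R = {}"
    and "\<And>x. x \<in> E \<Longrightarrow> rep x \<in> R \<and> w x = w (rep x) \<and> (\<forall>i. w i x = w i (rep x))"
  shows "\<exists>c>0. table_sum (R \<union> E) (R \<union> E) w \<rho> \<rho>
    = c * table_sum R R w (\<lambda>y. \<rho> y + (\<Sum>x\<in>{x \<in> E. rep x = y}. \<rho> x))
                          (\<lambda>y. \<rho> y + (\<Sum>x\<in>{x \<in> E. rep x = y}. \<rho> x))"
  using assms
proof (induction E arbitrary: \<rho> rule: finite_induct)
  case empty
  show ?case
    by (intro exI[of _ 1]) simp
next
  case (insert x' E)
  define y where "y = rep x'"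
  define \<rho>' where "\<rho>' = \<rho>(y := \<rho> y + \<rho> x')"
  have y: "y \<in> R" "w x' = w y" "\<And>i. w i x' = w i y"
    using insert.prems(3)[of x'] by (auto simp: y_def)
  moreover have "x' \<notin> R"
    using insert.prems(2) by auto
  ultimately have "y \<noteq> x'"
    by auto
  have "R \<union> insert x' E - {x'} = R \<union> E"
    using insert.hyps insert.prems(2) by auto
  moreover have "finite (R \<union> insert x' E)"
    using insert.hyps insert.prems(1) by simp
  ultimately have c: "table_sum (R \<union> insert x' E) (R \<union> insert x' E) w \<rho> \<rho>
      = real (\<rho> y + \<rho> x' choose \<rho> y) ^ 2 * table_sum (R \<union> E) (R \<union> E) w \<rho>' \<rho>'"
    using y \<open>y \<noteq> x'\<close> table_sum_merge_index[of "R \<union> insert x' E" y x' w \<rho>]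
    by (simp add: \<rho>'_def)
  have "real (\<rho> y + \<rho> x' choose \<rho> y) ^ 2 > 0"
    by simp
  let ?s = "\<lambda>\<rho> E z. \<rho> z + (\<Sum>x\<in>{x \<in> E. rep x = z}. \<rho> x)"
  have "\<exists>c'>0. table_sum (R \<union> E) (R \<union> E) w \<rho>' \<rho>' = c' * table_sum R R w (?s \<rho>' E) (?s \<rho>' E)"
    by (rule insert.IH) (use insert.prems in auto)
  then obtain c' where "c' > 0"
    and c': "table_sum (R \<union> E) (R \<union> E) w \<rho>' \<rho>' = c' * table_sum R R w (?s \<rho>' E) (?s \<rho>' E)"
    by blast
  have "y \<notin> E"
    using y(1) insert.prems(2) by auto
  then have "?s \<rho>' E z = ?s \<rho> (insert x' E) z" for z
    using insert.hyps unfolding \<rho>'_def y_def by (rule sum_fibres_fun_upd)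
  then show ?case
    using \<open>real (\<rho> y + \<rho> x' choose \<rho> y) ^ 2 > 0\<close> \<open>c' > 0\<close> c c'
    by (intro exI[of _ "real (\<rho> y + \<rho> x' choose \<rho> y) ^ 2 * c'"]) simp
qed

section \<open>Tables on three points\<close>

definition zero_diagonal_tables :: "'a set \<Rightarrow> ('a \<Rightarrow> nat) \<Rightarrow> ('a \<Rightarrow> nat) \<Rightarrow> ('a \<Rightarrow> 'a \<Rightarrow> nat) set" where
  "zero_diagonal_tables I \<rho> \<sigma> = {M \<in> contingency_tables I I \<rho> \<sigma>. \<forall>a. M a a = 0}"

lemma table_sum_eq_sum_zero_diagonal_tables:
  assumes "finite I" "\<And>a. w a a = 0"
  shows "table_sum I I w \<rho> \<sigma> = (\<Sum>M\<in>zero_diagonal_tables I \<rho> \<sigma>. table_weight I I w M)"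
  unfolding table_sum_def zero_diagonal_tables_def
proof (rule sum.mono_neutral_right)
  show "\<forall>M\<in>contingency_tables I I \<rho> \<sigma> - {M \<in> contingency_tables I I \<rho> \<sigma>. \<forall>a. M a a = 0}.
      table_weight I I w M = 0"
  proof
    fix M
    assume "M \<in> contingency_tables I I \<rho> \<sigma> - {M \<in> contingency_tables I I \<rho> \<sigma>. \<forall>a. M a a = 0}"
    then obtain a where "M a a \<noteq> 0" and "M \<in> contingency_tables I I \<rho> \<sigma>"
      by auto
    then have "a \<in> I"
      unfolding contingency_tables_def by (metis (mono_tags, lifting) mem_Collect_eq)
    then show "table_weight I I w M = 0"
      unfolding table_weight_def using assms \<open>M a a \<noteq> 0\<close> by (intro prod_zero bexI[of _ a]) auto
  qed
qed (use assms in \<open>auto intro: finite_contingency_tables\<close>)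

(* The symmetric table with off-diagonal entries A, B, C, plus k times the directed cycle
   i0 -> i1 -> i2 -> i0: these are all zero-diagonal tables with margins A + B, A + C, B + C. *)
definition three_cycle_table :: "'a \<Rightarrow> 'a \<Rightarrow> 'a \<Rightarrow> nat \<Rightarrow> nat \<Rightarrow> nat \<Rightarrow> int \<Rightarrow> 'a \<Rightarrow> 'a \<Rightarrow> nat" where
  "three_cycle_table i0 i1 i2 A B C k a b = nat
     (if (a, b) = (i0, i1) then A + k else if (a, b) = (i1, i0) then A - k
      else if (a, b) = (i0, i2) then B - k else if (a, b) = (i2, i0) then B + k
      else if (a, b) = (i1, i2) then C + k else if (a, b) = (i2, i1) then C - k else 0)"

lemma three_cycle_table_mem_zero_diagonal_tables:
  assumes "distinct [i0, i1, i2]" "s i0 = A + B" "s i1 = A + C" "s i2 = B + C"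
    and "\<bar>k\<bar> \<le> A" "\<bar>k\<bar> \<le> B" "\<bar>k\<bar> \<le> C"
  shows "three_cycle_table i0 i1 i2 A B C k
    \<in> zero_diagonal_tables {i0, i1, i2} s s"
  using assms by (auto simp: zero_diagonal_tables_def contingency_tables_def three_cycle_table_def)

lemma zero_diagonal_three_tables_sums:
  assumes "distinct [i0, i1, i2]" and M: "M \<in> zero_diagonal_tables {i0, i1, i2} s s"
  shows "M i0 i1 + M i0 i2 = s i0" "M i1 i0 + M i1 i2 = s i1" "M i2 i0 + M i2 i1 = s i2"
    "M i1 i0 + M i2 i0 = s i0" "M i0 i1 + M i2 i1 = s i1" "M i0 i2 + M i1 i2 = s i2"
proof -
  let ?R = "{i0, i1, i2}"
  have sum_R: "(\<Sum>x\<in>?R. f x) = f i0 + f i1 + f i2" for f :: "_ \<Rightarrow> nat"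
    using assms(1) by (simp add: add.assoc)
  have "M \<in> contingency_tables ?R ?R s s" and diagonal: "M i0 i0 = 0" "M i1 i1 = 0" "M i2 i2 = 0"
    using M by (simp_all add: zero_diagonal_tables_def)
  then have "(\<Sum>b\<in>?R. M a b) = s a" "(\<Sum>b\<in>?R. M b a) = s a" if "a \<in> ?R" for a
    using that unfolding contingency_tables_def mem_Collect_eq by blast+
  then have row: "M a i0 + M a i1 + M a i2 = s a" and col: "M i0 a + M i1 a + M i2 a = s a"
    if "a \<in> ?R" for a
    using that by (simp_all only: sum_R)
  show "M i0 i1 + M i0 i2 = s i0" "M i1 i0 + M i1 i2 = s i1" "M i2 i0 + M i2 i1 = s i2"
    "M i1 i0 + M i2 i0 = s i0" "M i0 i1 + M i2 i1 = s i1" "M i0 i2 + M i1 i2 = s i2"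
    using row[of i0] row[of i1] row[of i2] col[of i0] col[of i1] col[of i2] diagonal by simp_all
qed

lemma zero_diagonal_three_tables_eq_three_cycle_table:
  assumes "distinct [i0, i1, i2]" "s i0 = A + B" "s i1 = A + C" "s i2 = B + C"
    and M: "M \<in> zero_diagonal_tables {i0, i1, i2} s s"
  defines "k \<equiv> int (M i0 i1) - int A"
  shows "M = three_cycle_table i0 i1 i2 A B C k" and "\<bar>k\<bar> \<le> A" "\<bar>k\<bar> \<le> B" "\<bar>k\<bar> \<le> C"
proof -
  let ?R = "{i0, i1, i2}"
  have entries: "int (M i0 i1) = A + k" "int (M i1 i0) = A - k" "int (M i0 i2) = B - k"
    "int (M i2 i0) = B + k" "int (M i1 i2) = C + k" "int (M i2 i1) = C - k"
    using zero_diagonal_three_tables_sums[OF assms(1) M] assms(2-4) unfolding k_def by linarith+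
  then show "\<bar>k\<bar> \<le> A" "\<bar>k\<bar> \<le> B" "\<bar>k\<bar> \<le> C"
    by linarith+
  show "M = three_cycle_table i0 i1 i2 A B C k"
  proof (intro ext)
    fix a b
    show "M a b = three_cycle_table i0 i1 i2 A B C k a b"
    proof (cases "a \<in> ?R \<and> b \<in> ?R")
      case True
      have "i0 \<noteq> i1" "i0 \<noteq> i2" "i1 \<noteq> i2" "i1 \<noteq> i0" "i2 \<noteq> i0" "i2 \<noteq> i1"
        using assms(1) by auto
      moreover have "M i0 i1 = nat (A + k)" "M i1 i0 = nat (A - k)" "M i0 i2 = nat (B - k)"
        "M i2 i0 = nat (B + k)" "M i1 i2 = nat (C + k)" "M i2 i1 = nat (C - k)"
        by (simp_all flip: entries)
      moreover have "M i0 i0 = 0" "M i1 i1 = 0" "M i2 i2 = 0"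
        using M by (simp_all add: zero_diagonal_tables_def)
      ultimately show ?thesis
        using True by (elim conjE insertE emptyE) (simp_all add: three_cycle_table_def)
    next
      case False
      then have "M a b = 0"
        using M unfolding zero_diagonal_tables_def contingency_tables_def mem_Collect_eq by blast
      moreover have "three_cycle_table i0 i1 i2 A B C k a b = 0"
        using False by (auto simp: three_cycle_table_def split del: if_split)
      ultimately show ?thesis
        by simp
    qed
  qed
qed

lemma power_div_fact_eq_power_int:
  "0 \<le> n \<Longrightarrow> (x::real) ^ nat n / fact (nat n) = x powi n * inv_fact n"
  by (simp add: inv_fact_def power_int_def)

lemma three_cycle_weight_signs:
  fixes A B C :: nat and k :: int
  shows "(-1) powi (A + k) * (-2) powi (B - k) * 2 powi (B + k) * (-1) powi (C + k)
    = (-1::real) ^ (A + B + C) * 4 ^ B * (-1) powi k"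
proof -
  have "(-2::real) powi (B - k) = (-1) powi (B - k) * 2 powi (B - k)"
    using power_int_mult_distrib[of "-1::real" 2 "B - k"] by simp
  then have "(-1) powi (A + k) * (-2) powi (B - k) * 2 powi (B + k) * (-1) powi (C + k)
      = ((-1::real) powi (A + k) * (-1) powi (B - k) * (-1) powi (C + k)) * (2 powi (B - k) * 2 powi (B + k))"
    by (simp only: mult_ac)
  also have "\<dots> = (-1) powi (int (A + B + C) + k) * 2 powi int (2 * B)"
    by (simp flip: power_int_add add: algebra_simps)
  also have "\<dots> = (-1) ^ (A + B + C) * 4 ^ B * (-1) powi k"
    by (subst power_int_of_nat) (simp add: power_int_add power_add power_mult)
  finally show ?thesis .
qed

lemma table_weight_three_cycle_table:
  assumes "distinct [i0, i1, i2]" "v i0 = 0" "v i1 = 1" "v i2 = 2"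
    and "\<bar>k\<bar> \<le> A" "\<bar>k\<bar> \<le> B" "\<bar>k\<bar> \<le> C"
  shows "table_weight {i0, i1, i2} {i0, i1, i2} (\<lambda>a b. v a - v b) (three_cycle_table i0 i1 i2 A B C k)
    = (-1) ^ (A + B + C) * 4 ^ B * dixon_term A B C k"
proof -
  let ?T = "three_cycle_table i0 i1 i2 A B C k"
  define f where "f a b = (v a - v b) ^ ?T a b / fact (?T a b)" for a b
  have d: "i0 \<noteq> i1" "i0 \<noteq> i2" "i1 \<noteq> i2" "i1 \<noteq> i0" "i2 \<noteq> i0" "i2 \<noteq> i1"
    using assms(1) by auto
  then have "?T i0 i1 = nat (A + k)" "?T i1 i0 = nat (A - k)" "?T i0 i2 = nat (B - k)"
    "?T i2 i0 = nat (B + k)" "?T i1 i2 = nat (C + k)" "?T i2 i1 = nat (C - k)"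
    by (simp_all add: three_cycle_table_def)
  then have "f i0 i1 = (-1) powi (A + k) * inv_fact (A + k)" "f i1 i0 = inv_fact (A - k)"
    "f i0 i2 = (-2) powi (B - k) * inv_fact (B - k)" "f i2 i0 = 2 powi (B + k) * inv_fact (B + k)"
    "f i1 i2 = (-1) powi (C + k) * inv_fact (C + k)" "f i2 i1 = inv_fact (C - k)"
    using assms(2-7) by (simp_all add: f_def power_div_fact_eq_power_int inv_fact_def)
  moreover have "?T a a = 0" for a
    using d by (cases "a = i0"; cases "a = i1") (simp_all add: three_cycle_table_def)
  then have "f a a = 1" for a
    by (simp add: f_def)
  moreover have "table_weight {i0, i1, i2} {i0, i1, i2} (\<lambda>a b. v a - v b) ?T
      = (\<Prod>a\<in>{i0, i1, i2}. \<Prod>b\<in>{i0, i1, i2}. f a b)"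
    unfolding table_weight_def f_def ..
  ultimately have "table_weight {i0, i1, i2} {i0, i1, i2} (\<lambda>a b. v a - v b) ?T
      = (-1) powi (A + k) * (-2) powi (B - k) * 2 powi (B + k) * (-1) powi (C + k)
        * (inv_fact (A + k) * inv_fact (A - k) * inv_fact (B + k) * inv_fact (B - k)
           * inv_fact (C + k) * inv_fact (C - k))"
    using d by (simp add: mult_ac)
  also have "(-1) powi (A + k) * (-2) powi (B - k) * 2 powi (B + k) * (-1) powi (C + k)
      = (-1::real) ^ (A + B + C) * 4 ^ B * (-1) powi k"
    by (rule three_cycle_weight_signs)
  finally show ?thesis
    by (simp add: dixon_term_def mult_ac)
qed

lemma table_sum_three_points_eq_dixon_sum:
  assumes "distinct [i0, i1, i2]" "v i0 = 0" "v i1 = 1" "v i2 = 2"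
    and "s i0 = A + B" "s i1 = A + C" "s i2 = B + C"
  shows "table_sum {i0, i1, i2} {i0, i1, i2} (\<lambda>a b. v a - v b) s s
    = (-1) ^ (A + B + C) * 4 ^ B * dixon_sum A B C"
proof -
  let ?R = "{i0, i1, i2}" and ?m = "int (min A (min B C))"
  have "bij_betw (three_cycle_table i0 i1 i2 A B C) {-?m..?m} (zero_diagonal_tables ?R s s)"
  proof (rule bij_betw_byWitness[where f' = "\<lambda>M. int (M i0 i1) - int A"])
    show "\<forall>k\<in>{-?m..?m}. int (three_cycle_table i0 i1 i2 A B C k i0 i1) - int A = k"
      using assms(1) by (auto simp: three_cycle_table_def)
    show "three_cycle_table i0 i1 i2 A B C ` {-?m..?m} \<subseteq> zero_diagonal_tables ?R s s"
    proof (rule image_subsetI)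
      fix k
      assume "k \<in> {-?m..?m}"
      then have "\<bar>k\<bar> \<le> A" "\<bar>k\<bar> \<le> B" "\<bar>k\<bar> \<le> C"
        by auto
      then show "three_cycle_table i0 i1 i2 A B C k \<in> zero_diagonal_tables ?R s s"
        by (rule three_cycle_table_mem_zero_diagonal_tables[OF assms(1,5-7)])
    qed
    show "(\<lambda>M. int (M i0 i1) - int A) ` zero_diagonal_tables ?R s s
        \<subseteq> {-?m..?m}"
    proof (rule image_subsetI)
      fix M
      assume "M \<in> zero_diagonal_tables ?R s s"
      from zero_diagonal_three_tables_eq_three_cycle_table(2-4)[OF assms(1,5-7) this]
      show "int (M i0 i1) - int A \<in> {-?m..?m}"
        by auto
    qed
  qed (use zero_diagonal_three_tables_eq_three_cycle_table(1)[OF assms(1,5-7)] in auto)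
  then have "table_sum ?R ?R (\<lambda>a b. v a - v b) s s
      = (\<Sum>k\<in>{-?m..?m}. table_weight ?R ?R (\<lambda>a b. v a - v b) (three_cycle_table i0 i1 i2 A B C k))"
    by (simp add: table_sum_eq_sum_zero_diagonal_tables sum.reindex_bij_betw)
  also have "\<dots> = (-1) ^ (A + B + C) * 4 ^ B * (\<Sum>k\<in>{-?m..?m}. dixon_term A B C k)"
    unfolding sum_distrib_left
    by (intro sum.cong refl table_weight_three_cycle_table) (use assms(1-4) in auto)
  also have "(\<Sum>k\<in>{-?m..?m}. dixon_term A B C k) = dixon_sum A B C"
    unfolding dixon_sum_def by (intro sum.mono_neutral_left) (auto intro!: dixon_term_eq_0)
  finally show ?thesis .
qed

section \<open>The polynomial T\<close>

lemma Mset_eq_zero_diagonal_tables: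
  "Mset r e p = zero_diagonal_tables {..r} (margin r e p) (margin r e p)"
  unfolding Mset_def zero_diagonal_tables_def contingency_tables_def by (auto simp: not_le) (metis not_le)

(* With t = v r the last row and column are those of one more point; the sign comes from
   t - z_i = - (z_i - t) in the last column. *)
lemma Tpoly_eq_table_sum:
  fixes v :: "nat \<Rightarrow> real"
  shows "Tpoly r e p (v r) v
    = (-1) ^ margin r e p r * table_sum {..r} {..r} (\<lambda>a b. v a - v b) (margin r e p) (margin r e p)"
proof -
  let ?w = "\<lambda>a b. v a - v b"
  have split: "(\<Prod>i\<le>r. f i) = (\<Prod>i<r. f i) * f r" for f :: "nat \<Rightarrow> real"
    by (simp flip: lessThan_Suc_atMost)
  have summand: "(\<Prod>i<r. \<Prod>j<r. (v i - v j) ^ M i j) * (\<Prod>i<r. (v r - v i) ^ M i r)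
      * (\<Prod>j<r. (v r - v j) ^ M r j) / (\<Prod>i\<le>r. \<Prod>j\<le>r. fact (M i j))
      = (-1) ^ margin r e p r * table_weight {..r} {..r} ?w M" if M: "M \<in> Mset r e p" for M
  proof -
    have "M r r = 0" and "(\<Sum>i\<le>r. M i r) = margin r e p r"
      using M by (simp_all add: Mset_def)
    then have col: "(\<Sum>i<r. M i r) = margin r e p r"
      by (simp flip: lessThan_Suc_atMost)
    have "(\<Prod>i<r. (v i - v r) ^ M i r) = (\<Prod>i<r. (-1) ^ M i r * (v r - v i) ^ M i r)"
      by (intro prod.cong refl) (simp flip: power_mult_distrib)
    also have "\<dots> = (-1) ^ margin r e p r * (\<Prod>i<r. (v r - v i) ^ M i r)"
      by (simp only: prod.distrib power_sum[symmetric] col)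
    finally have "(\<Prod>i<r. (v i - v r) ^ M i r) = (-1) ^ margin r e p r * (\<Prod>i<r. (v r - v i) ^ M i r)" .
    moreover have "(-1::real) ^ margin r e p r * (-1) ^ margin r e p r = 1"
      by (simp flip: power_add)
    moreover have "table_weight {..r} {..r} ?w M
        = (\<Prod>i\<le>r. \<Prod>j\<le>r. ?w i j ^ M i j) / (\<Prod>i\<le>r. \<Prod>j\<le>r. fact (M i j))"
      by (simp add: table_weight_def prod_dividef)
    ultimately show ?thesis
      using \<open>M r r = 0\<close> by (simp add: split prod.distrib mult_ac)
  qed
  have "table_sum {..r} {..r} ?w (margin r e p) (margin r e p) = (\<Sum>M\<in>Mset r e p. table_weight {..r} {..r} ?w M)"
    by (simp add: table_sum_eq_sum_zero_diagonal_tables Mset_eq_zero_diagonal_tables)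
  then show ?thesis
    by (simp add: Tpoly_def summand sum_distrib_left)
qed

lemma table_sum_three_values_ne_0:
  fixes \<kappa> :: "'a \<Rightarrow> nat"
  assumes "finite X" "i0 \<in> X" "i1 \<in> X" "i2 \<in> X" "\<kappa> i0 = 0" "\<kappa> i1 = 1" "\<kappa> i2 = 2"
    and "\<forall>x\<in>X. \<kappa> x \<le> 2"
    and "(\<Sum>x\<in>{x \<in> X. \<kappa> x = 0}. \<rho> x) = A + B" "(\<Sum>x\<in>{x \<in> X. \<kappa> x = 1}. \<rho> x) = A + C"
      "(\<Sum>x\<in>{x \<in> X. \<kappa> x = 2}. \<rho> x) = B + C"
  shows "table_sum X X (\<lambda>a b. real (\<kappa> a) - real (\<kappa> b)) \<rho> \<rho> \<noteq> 0"
proof -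
  let ?R = "{i0, i1, i2}" and ?w = "\<lambda>a b. real (\<kappa> a) - real (\<kappa> b)"
  define rep where "rep x = [i0, i1, i2] ! \<kappa> x" for x
  define s where "s y = \<rho> y + (\<Sum>x\<in>{x \<in> X - ?R. rep x = y}. \<rho> x)" for y
  have rep: "rep x \<in> ?R \<and> \<kappa> (rep x) = \<kappa> x" if "x \<in> X" for x
    using assms(5-8) that by (auto simp: rep_def numeral_2_eq_2 less_Suc_eq nth_Cons')
  have distinct: "distinct [i0, i1, i2]"
    using assms(5-7) by auto
  obtain c where "c > 0" and "table_sum (?R \<union> (X - ?R)) (?R \<union> (X - ?R)) ?w \<rho> \<rho> = c * table_sum ?R ?R ?w s s"
    using table_sum_collapse[of "X - ?R" ?R rep ?w \<rho>] assms(1) rep unfolding s_def by auto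
  moreover have "?R \<union> (X - ?R) = X"
    using assms(2-4) by auto
  moreover have "s y = (\<Sum>x\<in>{x \<in> X. \<kappa> x = \<kappa> y}. \<rho> x)" if "y \<in> ?R" for y
  proof -
    have inj: "inj_on \<kappa> ?R"
      using assms(5-7) by (auto simp: inj_on_def)
    have "rep x = y \<longleftrightarrow> \<kappa> x = \<kappa> y" if "x \<in> X" for x
      using rep[OF that] inj_on_eq_iff[OF inj _ \<open>y \<in> ?R\<close>] by metis
    moreover have "\<kappa> x = \<kappa> y \<longleftrightarrow> x = y" if "x \<in> ?R" for x
      using inj_on_eq_iff[OF inj that \<open>y \<in> ?R\<close>] .
    ultimately have "{x \<in> X. \<kappa> x = \<kappa> y} = insert y {x \<in> X - ?R. rep x = y}"
      using that assms(2-4) by blast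
    moreover have "y \<notin> {x \<in> X - ?R. rep x = y}"
      using that by blast
    ultimately show ?thesis
      using assms(1) by (simp add: s_def)
  qed
  ultimately have "table_sum X X ?w \<rho> \<rho> = c * ((-1) ^ (A + B + C) * 4 ^ B * dixon_sum A B C)"
    using assms(5-7,9-11) table_sum_three_points_eq_dixon_sum[OF distinct, of "\<lambda>a. real (\<kappa> a)"] by simp
  then show ?thesis
    using \<open>c > 0\<close> dixon_sum_pos[of A B C] by simp
qed

lemma exists_three_block_sizes:
  fixes r e p :: nat
  assumes "2 \<le> r" "2 * p \<le> r * e"
  obtains \<alpha> \<gamma> A B C where "1 \<le> \<alpha>" "\<alpha> + \<gamma> < r" "\<alpha> * e = A + B" "(r - \<gamma> - \<alpha>) * e = A + C"
    "\<gamma> * e + (r * e - 2 * p) = B + C"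
proof -
  define m where "m = r div 2"
  have m: "1 \<le> m" "m \<le> r - m" "2 * m \<le> r" "r \<le> 2 * m + 1"
    using assms(1) by (auto simp: m_def)
  have "e \<le> m * e"
    using m by simp
  have "m * e \<le> (r - m) * e"
    using m by (intro mult_le_mono1)
  have "(r - m) * e = r * e - m * e"
    by (rule diff_mult_distrib)
  have "2 * m * e \<le> r * e" "r * e \<le> (2 * m + 1) * e"
    using m by (intro mult_le_mono1; simp)+
  then have "2 * (m * e) \<le> r * e" "r * e \<le> 2 * (m * e) + e"
    by (simp_all add: algebra_simps)
  show ?thesis
  proof (cases "p \<le> m * e")
    case True
    show ?thesis
      by (rule that[of m 0 p "m * e - p" "(r - m) * e - p"])
        (use True m \<open>m * e \<le> (r - m) * e\<close> \<open>(r - m) * e = r * e - m * e\<close> in auto)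
  next
    case False
    then have "r = 2 * m + 1"
      using m assms(2) \<open>2 * (m * e) \<le> r * e\<close> by (cases "r = 2 * m") auto
    then have "r * e = 2 * (m * e) + e" "(r - 1 - m) * e = m * e"
      by (simp_all add: algebra_simps)
    then have "e \<le> p" "p \<le> m * e + e"
      using False \<open>e \<le> m * e\<close> assms(2) by linarith+
    show ?thesis
      by (rule that[of m 1 "p - e" "m * e + e - p" "m * e + e - p"])
        (use m \<open>r = 2 * m + 1\<close> \<open>e \<le> p\<close> \<open>p \<le> m * e + e\<close> \<open>r * e = 2 * (m * e) + e\<close>
          \<open>(r - 1 - m) * e = m * e\<close> assms(2) in linarith)+
  qed
qed

definition three_blocks :: "nat \<Rightarrow> nat \<Rightarrow> nat \<Rightarrow> nat \<Rightarrow> nat" where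
  "three_blocks r \<alpha> \<gamma> i = (if i < \<alpha> then 0 else if i < r - \<gamma> then 1 else 2)"

lemma sum_margin_three_blocks:
  assumes "\<alpha> + \<gamma> < r"
  shows "(\<Sum>i\<in>{i \<in> {..r}. three_blocks r \<alpha> \<gamma> i = 0}. margin r e p i) = \<alpha> * e"
    and "(\<Sum>i\<in>{i \<in> {..r}. three_blocks r \<alpha> \<gamma> i = 1}. margin r e p i) = (r - \<gamma> - \<alpha>) * e"
    and "(\<Sum>i\<in>{i \<in> {..r}. three_blocks r \<alpha> \<gamma> i = 2}. margin r e p i) = \<gamma> * e + (r * e - 2 * p)"
proof -
  have "{i \<in> {..r}. three_blocks r \<alpha> \<gamma> i = 0} = {..<\<alpha>}"
    "{i \<in> {..r}. three_blocks r \<alpha> \<gamma> i = 1} = {\<alpha>..<r - \<gamma>}"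
    "{i \<in> {..r}. three_blocks r \<alpha> \<gamma> i = 2} = insert r {r - \<gamma>..<r}"
    using assms by (auto simp: three_blocks_def)
  moreover have "(\<Sum>i\<in>S. margin r e p i) = card S * e" if "S \<subseteq> {..<r}" for S
    using that by (simp add: margin_def subset_iff)
  moreover have "{..<\<alpha>} \<subseteq> {..<r}" "{\<alpha>..<r - \<gamma>} \<subseteq> {..<r}" "{r - \<gamma>..<r} \<subseteq> {..<r}"
    using assms by auto
  ultimately show "(\<Sum>i\<in>{i \<in> {..r}. three_blocks r \<alpha> \<gamma> i = 0}. margin r e p i) = \<alpha> * e"
    and "(\<Sum>i\<in>{i \<in> {..r}. three_blocks r \<alpha> \<gamma> i = 1}. margin r e p i) = (r - \<gamma> - \<alpha>) * e"
    and "(\<Sum>i\<in>{i \<in> {..r}. three_blocks r \<alpha> \<gamma> i = 2}. margin r e p i) = \<gamma> * e + (r * e - 2 * p)"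
    using assms by (simp_all add: margin_def)
qed

theorem mainTheorem5:
  fixes r e p :: nat
  assumes "r \<ge> 2" and "e \<ge> 1" and "p \<le> (r * e) div 2"
  shows "\<exists>t z. Tpoly r e p t z \<noteq> 0"
proof -
  obtain \<alpha> \<gamma> A B C where "1 \<le> \<alpha>" "\<alpha> + \<gamma> < r" and blocks: "\<alpha> * e = A + B"
    "(r - \<gamma> - \<alpha>) * e = A + C" "\<gamma> * e + (r * e - 2 * p) = B + C"
  proof (rule exists_three_block_sizes[OF assms(1)])
    show "2 * p \<le> r * e"
      using assms(3) div_times_less_eq_dividend[of "r * e" 2] by linarith
  qed
  define \<kappa> where "\<kappa> = three_blocks r \<alpha> \<gamma>"
  have "table_sum {..r} {..r} (\<lambda>a b. real (\<kappa> a) - real (\<kappa> b)) (margin r e p) (margin r e p) \<noteq> 0"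
  proof (rule table_sum_three_values_ne_0[where A = A and B = B and C = C])
    show "\<kappa> 0 = 0" "\<kappa> \<alpha> = 1" "\<kappa> r = 2" "\<forall>x\<in>{..r}. \<kappa> x \<le> 2"
      using \<open>1 \<le> \<alpha>\<close> \<open>\<alpha> + \<gamma> < r\<close> by (auto simp: \<kappa>_def three_blocks_def)
  qed (use \<open>\<alpha> + \<gamma> < r\<close> sum_margin_three_blocks[OF \<open>\<alpha> + \<gamma> < r\<close>, of e p] blocks
      in \<open>simp_all add: \<kappa>_def\<close>)
  then have "Tpoly r e p (real (\<kappa> r)) (\<lambda>i. real (\<kappa> i)) \<noteq> 0"
    by (simp add: Tpoly_eq_table_sum[of r e p "\<lambda>i. real (\<kappa> i)"])
  then show ?thesis
    by blast
qed

end
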